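(* For every $m\ge1$, the unipotent conjugacy classes of type $(3)$ in $\mathbf{PSL}_3(2^{2m})$ are of type D.
   Context: Type $(3)$ means a single Jordan block of size 3 (regular unipotent). Conjugacy classes are racks with $x\triangleright y=xyx^{-1}$. A subrack $Y$ is decomposable if $Y=R\sqcup S$ with nonempty subracks $R,S$, $Y\triangleright R=R$, $Y\triangleright S=S$. Type D: a decomposable subrack $R\sqcup S$ with $r\in R,s\in S$ and $r\triangleright(s\triangleright(r\triangleright s))\neq s$. *)

theory Defs
  imports "HOL-Analysis.Analysis"
begin

text \<open>A rack is given by a carrier set X and an operation op (x triangleright y = op x y).
  A subrack of X is a subset closed under the operation.\<close>

definition subrack :: "('b \<Rightarrow> 'b \<Rightarrow> 'b) \<Rightarrow> 'b set \<Rightarrow> 'b set \<Rightarrow> bool" where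
  "subrack op X Y \<longleftrightarrow> Y \<subseteq> X \<and> (\<forall>x\<in>Y. \<forall>y\<in>Y. op x y \<in> Y)"

definition decomposition :: "('b \<Rightarrow> 'b \<Rightarrow> 'b) \<Rightarrow> 'b set \<Rightarrow> 'b set \<Rightarrow> 'b set \<Rightarrow> 'b set \<Rightarrow> bool" where
  "decomposition op X Y R S \<longleftrightarrow>
     subrack op X Y \<and> subrack op X R \<and> subrack op X S \<and>
     R \<noteq> {} \<and> S \<noteq> {} \<and> R \<inter> S = {} \<and> Y = R \<union> S \<and>
     {op y r | y r. y \<in> Y \<and> r \<in> R} = R \<and>
     {op y s | y s. y \<in> Y \<and> s \<in> S} = S"

definition type_D :: "('b \<Rightarrow> 'b \<Rightarrow> 'b) \<Rightarrow> 'b set \<Rightarrow> bool" where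
  "type_D op X \<longleftrightarrow>
     (\<exists>Y R S r s. decomposition op X Y R S \<and> r \<in> R \<and> s \<in> S \<and>
        op r (op s (op r s)) \<noteq> s)"

definition sl3 :: "(('a::field)^3^3) set" where
  "sl3 = {A. det A = 1}"

text \<open>An element of PSL_3 is the coset of an SL_3 matrix modulo the centre
  (scalar matrices c I with c^3 = 1).\<close>

definition pcls :: "('a::field)^3^3 \<Rightarrow> ('a^3^3) set" where
  "pcls A = {mat c ** A | c. c ^ 3 = 1}"

definition psl3 :: "(('a::field)^3^3) set set" where
  "psl3 = pcls ` sl3"

definition prep :: "(('a::field)^3^3) set \<Rightarrow> 'a^3^3" where
  "prep X = (SOME A. A \<in> X)"

definition pconj :: "(('a::field)^3^3) set \<Rightarrow> ('a^3^3) set \<Rightarrow> ('a^3^3) set" where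
  "pconj X Y = pcls (prep X ** prep Y ** matrix_inv (prep X))"

definition psl3_conj_class :: "(('a::field)^3^3) set \<Rightarrow> ('a^3^3) set set" where
  "psl3_conj_class X = {pconj G X | G. G \<in> psl3}"

text \<open>Unipotent of type (3): a single Jordan block of size 3, i.e. (A - I)^3 = 0
  and (A - I)^2 \<noteq> 0.\<close>

definition regular_unipotent3 :: "('a::field)^3^3 \<Rightarrow> bool" where
  "regular_unipotent3 A \<longleftrightarrow> A \<in> sl3 \<and>
     (A - mat 1) ** (A - mat 1) ** (A - mat 1) = 0 \<and>
     (A - mat 1) ** (A - mat 1) \<noteq> 0"

end

theory Submission
  imports Defs "HOL-Computational_Algebra.Polynomial"
begin

(* A field F of order 4^m has characteristic 2 and, since 3 divides 4^m - 1,
   contains a primitive cube root of unity w, i.e. a copy {0, 1, w, w + 1} of GF(4).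
   A regular unipotent A is conjugate in GL_3(F) to the lower Jordan block J3, say
   A = h J3 h^-1.  We exhibit 18 explicit matrices K_0 = J3, K_1, ..., K_17 over GF(4)
   together with a multiplication table t such that K_i K_j = K_(t i j) K_i, conjugators
   G_i of determinant 1 with G_i J3 = K_i G_i; the K_i have trace 1 and are distinct.
   These finitely many identities are checked once and for all by computation in a
   concrete model of GF(4) and transported into F along the embedding GF(4) -> F.
   Conjugating everything by h, the 18 classes P_i = [h K_i h^-1] lie in the PSL_3(F)
   conjugacy class of [A], are pairwise distinct, and satisfy P_i |> P_j = P_(t i j).
   The table shows that R = {P_0..P_8} and S = {P_9..P_17} form a decomposable subrack
   R u S, and the entries t 0 9 = 10, t 9 10 = 17, t 0 17 = 11 show
   P_0 |> (P_9 |> (P_0 |> P_9)) = P_11 <> P_9, which is the type D condition. *)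

section \<open>Finite fields of order \<open>4^m\<close>\<close>

lemma finite_field_unit_power:
  fixes x :: "'a::{field,finite}"
  assumes "x \<noteq> 0"
  shows "x ^ (CARD('a) - 1) = 1"
proof -
  let ?U = "UNIV - {0::'a}"
  have "bij_betw (\<lambda>a. x * a) ?U ?U"
    by (rule bij_betwI[where g = "\<lambda>a. a / x"]) (use assms in auto)
  then have "prod (\<lambda>a. x * a) ?U = prod id ?U"
    using prod.reindex_bij_betw[of _ ?U ?U id] by simp
  moreover have "prod (\<lambda>a. x * a) ?U = x ^ card ?U * prod id ?U"
    by (simp add: prod.distrib)
  moreover have "prod id ?U \<noteq> 0" by simp
  moreover have "card ?U = CARD('a) - 1"
    by (simp add: card_Diff_singleton)
  ultimately show ?thesis by (metis mult_cancel_right2)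
qed

text \<open>A finite field of even order has characteristic 2, since then \<open>(-1)^(q-1) = -1\<close>.\<close>

lemma even_card_char_two:
  assumes "even CARD('a::{field,finite})"
  shows "(1::'a) + 1 = 0"
proof -
  have "odd (CARD('a) - 1)"
    using assms finite_UNIV_card_ge_0[where 'a = 'a] by simp
  then have "(-1::'a) = 1"
    using finite_field_unit_power[of "-1::'a"] by simp
  then show ?thesis by (metis add.right_inverse)
qed

text \<open>If \<open>3\<close> divides \<open>q - 1\<close>, the field contains a root of \<open>x^2 + x + 1\<close>: otherwise cubing
  would be injective, hence bijective, on the units, so every unit would satisfy
  \<open>y^((q-1)/3) = 1\<close>, too many roots for a polynomial of that degree.\<close>

lemma cube_root_of_unity_exists:
  assumes "3 dvd CARD('a::{field,finite}) - 1"
  shows "\<exists>w::'a. w * w + w + 1 = 0"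
proof (rule ccontr)
  assume no_root: "\<not> (\<exists>w::'a. w * w + w + 1 = 0)"
  let ?U = "UNIV - {0::'a}"
  obtain k where k: "CARD('a) - 1 = 3 * k" using assms by blast
  have "card {0, 1::'a} \<le> CARD('a)" by (rule card_mono) auto
  then have k_pos: "k \<ge> 1" using k by simp
  have "inj_on (\<lambda>x. x ^ 3) ?U"
  proof (rule inj_onI)
    fix x y :: 'a assume "x \<in> ?U" "y \<in> ?U" "x ^ 3 = y ^ 3"
    define z where "z = x / y"
    have "z ^ 3 = 1" using \<open>x ^ 3 = y ^ 3\<close> \<open>y \<in> ?U\<close> by (simp add: z_def power_divide)
    then have "(z - 1) * (z * z + z + 1) = 0" by (simp add: algebra_simps power3_eq_cube)
    then have "z = 1" using no_root by (metis eq_iff_diff_eq_0 mult_eq_0_iff)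
    then show "x = y" using \<open>y \<in> ?U\<close> by (simp add: z_def)
  qed
  then have cubes: "(\<lambda>x. x ^ 3) ` ?U = ?U"
    by (rule endo_inj_surj[rotated 2]) auto
  have unit_root: "y ^ k = 1" if "y \<in> ?U" for y
  proof -
    have "y \<in> (\<lambda>x. x ^ 3) ` ?U" using cubes that by (simp only:)
    then obtain x where "x \<in> ?U" "y = x ^ 3" by (rule imageE)
    then have "y ^ k = x ^ (3 * k)" by (simp add: power_mult)
    also have "\<dots> = x ^ (CARD('a) - 1)" by (simp only: k)
    also have "\<dots> = 1" using \<open>x \<in> ?U\<close> finite_field_unit_power by auto
    finally show ?thesis .
  qed
  define p :: "'a poly" where "p = monom 1 k - 1"
  have "coeff p k = 1" using k_pos by (simp add: p_def coeff_monom)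
  then have "p \<noteq> 0" by auto
  have "degree p \<le> k" unfolding p_def
    by (rule degree_diff_le) (auto simp: degree_monom_le)
  have "?U \<subseteq> {x. poly p x = 0}" using unit_root by (auto simp: p_def poly_monom)
  then have "card ?U \<le> card {x. poly p x = 0}" by (intro card_mono) auto
  also have "\<dots> \<le> degree p" by (rule card_poly_roots_bound[OF \<open>p \<noteq> 0\<close>])
  finally have "card ?U \<le> k" using \<open>degree p \<le> k\<close> by linarith
  moreover have "card ?U = 3 * k" using k by (simp add: card_Diff_singleton)
  ultimately show False using k_pos by linarith
qed

lemma three_dvd_four_power_minus_one: "3 dvd (4::nat) ^ m - 1"
proof -
  have "(4::nat) ^ m mod 3 = 1"
    using power_mod[of "4::nat" 3 m] by simp
  then show ?thesis by (metis dvd_minus_mod)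
qed

lemma card_four_power_facts:
  assumes "m \<ge> 1" and "CARD('a::{field,finite}) = 2 ^ (2 * m)"
  shows "(1::'a) + 1 = 0" and "\<exists>w::'a. w * w + w + 1 = 0"
proof -
  have "CARD('a) = 4 ^ m" using assms(2) by (simp add: power_mult)
  then show "(1::'a) + 1 = 0"
    using assms(1) by (intro even_card_char_two) simp
  show "\<exists>w::'a. w * w + w + 1 = 0"
    using \<open>CARD('a) = 4 ^ m\<close> three_dvd_four_power_minus_one
    by (intro cube_root_of_unity_exists) simp
qed


section \<open>Scalar multiples and projective classes in \<open>PSL_3\<close>\<close>

definition smul :: "'a::field \<Rightarrow> 'a^3^3 \<Rightarrow> 'a^3^3" where
  "smul c X = mat c ** X"

lemma smul_entry: "smul c X $ i $ j = c * X $ i $ j"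
  by (simp add: smul_def matrix_matrix_mult_def mat_def if_distrib if_distribR sum.delta
      cong: if_cong)

lemma smul_mult_left: "smul c X ** Y = smul c (X ** Y)"
  by (simp add: vec_eq_iff smul_entry matrix_matrix_mult_def sum_distrib_left mult.assoc)

lemma smul_mult_right: "X ** smul c Y = smul c (X ** Y)"
  by (simp add: vec_eq_iff smul_entry matrix_matrix_mult_def sum_distrib_left algebra_simps)

lemma smul_smul: "smul c (smul d X) = smul (c * d) X"
  by (simp add: vec_eq_iff smul_entry mult.assoc)

lemma smul_one: "smul 1 X = X"
  by (simp add: vec_eq_iff smul_entry)

lemma matrix_inv_mult:
  fixes M :: "'a::field^'n^'n"
  assumes "invertible M"
  shows "M ** matrix_inv M = mat 1" "matrix_inv M ** M = mat 1"
  using someI_ex[OF assms[unfolded invertible_def]] unfolding matrix_inv_def by auto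

lemma invertible_smul:
  fixes M :: "'a::field^3^3"
  assumes "invertible M" "c \<noteq> 0"
  shows "invertible (smul c M)"
proof -
  have "smul c M ** smul (1 / c) (matrix_inv M) = mat 1"
    using assms by (simp add: smul_mult_left smul_mult_right smul_smul matrix_inv_mult smul_one)
  then show ?thesis using invertible_right_inverse by blast
qed

lemma pcls_smul_def: "pcls X = {smul c X | c. c ^ 3 = 1}"
  by (simp add: pcls_def smul_def)

lemma pcls_self: "X \<in> pcls X"
  unfolding pcls_smul_def by (rule CollectI, rule exI[of _ 1]) (simp add: smul_one)

lemma pcls_smul:
  assumes "c ^ 3 = (1::'a::field)"
  shows "pcls (smul c P) = pcls P"
proof -
  have "c \<noteq> 0" using assms by auto
  show ?thesis unfolding pcls_smul_def
  proof (intro set_eqI iffI)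
    fix Q assume "Q \<in> {smul d (smul c P) | d. d ^ 3 = 1}"
    then obtain d where "d ^ 3 = 1" "Q = smul d (smul c P)" by blast
    then show "Q \<in> {smul d P | d. d ^ 3 = 1}" using assms
      by (auto simp: smul_smul power_mult_distrib intro!: exI[of _ "d * c"])
  next
    fix Q assume "Q \<in> {smul d P | d. d ^ 3 = 1}"
    then obtain d where d: "d ^ 3 = 1" "Q = smul d P" by blast
    have "Q = smul (d / c) (smul c P)" using \<open>c \<noteq> 0\<close> d by (simp add: smul_smul)
    moreover have "(d / c) ^ 3 = 1" using d assms by (simp add: power_divide)
    ultimately show "Q \<in> {smul d (smul c P) | d. d ^ 3 = 1}" by blast
  qed
qed

lemma pcls_eq_imp_smul:
  assumes "pcls P = pcls Q"
  shows "\<exists>c. c ^ 3 = (1::'a::field) \<and> Q = smul c P"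
proof -
  have "Q \<in> pcls P" using pcls_self[of Q] assms by simp
  then show ?thesis unfolding pcls_smul_def by blast
qed

lemma prep_pcls: "\<exists>c. c ^ 3 = (1::'a::field) \<and> prep (pcls M) = smul c M"
proof -
  have "prep (pcls M) \<in> pcls M" unfolding prep_def by (rule someI[of _ M], rule pcls_self)
  then show ?thesis unfolding pcls_smul_def by blast
qed

lemma pcls_conj_eq:
  fixes M N P :: "'a::field^3^3"
  assumes "invertible M" "M ** N = smul c P ** M" "c ^ 3 = 1"
  shows "pcls (M ** N ** matrix_inv M) = pcls P"
proof -
  have "M ** N ** matrix_inv M = smul c P ** (M ** matrix_inv M)"
    using assms(2) by (simp add: matrix_mul_assoc)
  also have "\<dots> = smul c P" using matrix_inv_mult[OF assms(1)] by simp
  finally show ?thesis using pcls_smul[OF assms(3)] by simp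
qed

lemma pconj_pcls:
  fixes M N :: "'a::field^3^3"
  assumes "invertible M"
  shows "pconj (pcls M) (pcls N) = pcls (M ** N ** matrix_inv M)"
proof -
  obtain c where c: "c ^ 3 = 1" "prep (pcls M) = smul c M" using prep_pcls by blast
  obtain d where d: "d ^ 3 = 1" "prep (pcls N) = smul d N" using prep_pcls by blast
  have "c \<noteq> 0" using c by auto
  have inv: "invertible (smul c M)" by (rule invertible_smul[OF assms \<open>c \<noteq> 0\<close>])
  have "smul c M ** smul d N = smul d (M ** N ** matrix_inv M) ** smul c M"
    using matrix_inv_mult[OF assms]
    by (simp add: smul_mult_left smul_mult_right smul_smul matrix_mul_assoc[symmetric]
        mult.commute)
  then have "pcls (smul c M ** smul d N ** matrix_inv (smul c M)) = pcls (M ** N ** matrix_inv M)"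
    by (rule pcls_conj_eq[OF inv _ d(1)])
  then show ?thesis unfolding pconj_def c d .
qed

lemma pconj_of_commutation:
  fixes M N P :: "'a::field^3^3"
  assumes "invertible M" "M ** N = P ** M"
  shows "pconj (pcls M) (pcls N) = pcls P"
  using pcls_conj_eq[OF assms(1), of N 1 P] assms(2) by (simp add: pconj_pcls[OF assms(1)] smul_one)

lemma mem_psl3_conj_class:
  fixes G N P :: "'a::field^3^3"
  assumes "det G = 1" "G ** N = P ** G"
  shows "pcls P \<in> psl3_conj_class (pcls N)"
proof -
  have "invertible G" using assms(1) by (simp add: invertible_det_nz)
  have "pcls G \<in> psl3" using assms(1) by (auto simp: psl3_def sl3_def)
  moreover have "pconj (pcls G) (pcls N) = pcls P"
    by (rule pconj_of_commutation[OF \<open>invertible G\<close> assms(2)])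
  ultimately show ?thesis unfolding psl3_conj_class_def by blast
qed

definition mconj :: "'a::field^3^3 \<Rightarrow> 'a^3^3 \<Rightarrow> 'a^3^3" where
  "mconj h K = h ** K ** matrix_inv h"

context
  fixes h :: "'a::field^3^3"
  assumes h_inv: "invertible h"
begin

lemma mconj_mult: "mconj h K ** mconj h L = mconj h (K ** L)"
proof -
  have "mconj h K ** mconj h L = h ** K ** (matrix_inv h ** h) ** L ** matrix_inv h"
    by (simp add: mconj_def matrix_mul_assoc)
  then show ?thesis by (simp add: matrix_inv_mult[OF h_inv] mconj_def matrix_mul_assoc)
qed

lemma mconj_smul: "mconj h (smul c K) = smul c (mconj h K)"
  by (simp add: mconj_def smul_mult_left smul_mult_right)

lemma mconj_inj: "mconj h K = mconj h L \<Longrightarrow> K = L"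
proof -
  have "matrix_inv h ** mconj h K ** h = (matrix_inv h ** h) ** K ** (matrix_inv h ** h)" for K
    by (simp add: mconj_def matrix_mul_assoc)
  then have "matrix_inv h ** mconj h K ** h = K" for K
    by (simp add: matrix_inv_mult[OF h_inv])
  then show "mconj h K = mconj h L \<Longrightarrow> K = L" by metis
qed

lemma det_mconj: "det (mconj h K) = det K"
proof -
  have "det h * det (matrix_inv h) = 1"
    using matrix_inv_mult[OF h_inv] det_mul[of h "matrix_inv h"] by (simp add: det_I)
  then show ?thesis by (simp add: mconj_def det_mul algebra_simps)
qed

end


section \<open>Regular unipotent matrices are conjugate to the Jordan block\<close>

definition J3 :: "'a::field^3^3" where
  "J3 = (\<chi> i j. if i = j \<or> (i = 2 \<and> j = 1) \<or> (i = 3 \<and> j = 2) then 1 else 0)"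

lemma matrix_vector_mult_smult: "(N::'a::field^'n^'m) *v (c *s x) = c *s (N *v x)"
  by (simp add: vec_eq_iff matrix_vector_mult_def sum_distrib_left algebra_simps)

lemma smult_eq_0_imp:
  fixes x :: "'a::field^'n"
  assumes "c *s x = 0" "x \<noteq> 0"
  shows "c = 0"
  using assms by (metis vec_eq_iff vector_smult_component zero_index mult_eq_0_iff)

text \<open>If \<open>N\<^sup>3 v = 0\<close> but \<open>N\<^sup>2 v \<noteq> 0\<close>, then \<open>v, N v, N\<^sup>2 v\<close> are linearly independent:
  applying \<open>N\<^sup>2\<close> and then \<open>N\<close> to a vanishing combination kills its coefficients in turn.\<close>

lemma nilpotent_chain_independent:
  fixes N :: "'a::field^'n^'n"
  assumes "N *v (N *v (N *v v)) = 0" "N *v (N *v v) \<noteq> 0"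
    and comb: "a *s v + b *s (N *v v) + c *s (N *v (N *v v)) = 0"
  shows "a = 0" "b = 0" "c = 0"
proof -
  have "N *v (N *v (a *s v + b *s (N *v v) + c *s (N *v (N *v v)))) = a *s (N *v (N *v v))"
    using assms(1) by (simp add: matrix_vector_right_distrib matrix_vector_mult_smult)
  then show a: "a = 0" using comb assms(2) smult_eq_0_imp by (metis matrix_vector_mult_0_right)
  have "N *v (a *s v + b *s (N *v v) + c *s (N *v (N *v v))) = b *s (N *v (N *v v))"
    using assms(1) a by (simp add: matrix_vector_right_distrib matrix_vector_mult_smult)
  then show b: "b = 0" using comb assms(2) smult_eq_0_imp by (metis matrix_vector_mult_0_right)
  show "c = 0" using comb a b assms(2) smult_eq_0_imp by simp
qed

text \<open>A matrix \<open>A\<close> with \<open>(A - 1)\<^sup>3 = 0 \<noteq> (A - 1)\<^sup>2\<close> is similar to \<^const>\<open>J3\<close>: the columns of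
  the conjugating matrix are \<open>v, N v, N\<^sup>2 v\<close> for \<open>N = A - 1\<close> and any \<open>v\<close> with \<open>N\<^sup>2 v \<noteq> 0\<close>.\<close>

lemma regular_unipotent_conj_J3:
  fixes A :: "'a::field^3^3"
  assumes nil3: "(A - mat 1) ** (A - mat 1) ** (A - mat 1) = 0"
    and nonzero2: "(A - mat 1) ** (A - mat 1) \<noteq> 0"
  shows "\<exists>h. invertible h \<and> A ** h = h ** J3"
proof -
  define N where "N = A - mat 1"
  obtain v where v: "N *v (N *v v) \<noteq> 0"
    using nonzero2 unfolding N_def by (metis matrix_eq matrix_vector_mult_0 matrix_vector_mul_assoc)
  define u2 where "u2 = N *v v"
  define u3 where "u3 = N *v u2"
  have N_u3: "N *v u3 = 0"
    using nil3 unfolding N_def[symmetric] u3_def u2_def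
    by (metis matrix_vector_mul_assoc matrix_vector_mult_0)
  have A_act: "A *v x = N *v x + x" for x
    by (simp add: N_def matrix_vector_mult_diff_rdistrib)
  define h :: "'a^3^3" where "h = (\<chi> i j. if j = 1 then v $ i else if j = 2 then u2 $ i else u3 $ i)"
  have h_cols: "(\<chi> k. h $ k $ 1) = v" "(\<chi> k. h $ k $ 2) = u2" "(\<chi> k. h $ k $ 3) = u3"
    by (simp_all add: h_def vec_eq_iff)
  have "(A ** h) $ i $ j = (h ** J3) $ i $ j" for i j
  proof -
    have col: "(A ** h) $ i $ j = (A *v (\<chi> k. h $ k $ j)) $ i"
      by (simp add: matrix_matrix_mult_def matrix_vector_mult_def)
    show ?thesis unfolding col using exhaust_3[of j]
      by (elim disjE) (simp_all add: h_cols A_act matrix_matrix_mult_def sum_3 J3_def h_def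
          u2_def[symmetric] u3_def[symmetric] N_u3 add.commute)
  qed
  then have "A ** h = h ** J3" by (simp add: vec_eq_iff)
  moreover have "invertible h"
    unfolding invertible_left_inverse matrix_left_invertible_ker
  proof (intro allI impI)
    fix x assume "h *v x = 0"
    then have "x $ 1 *s v + x $ 2 *s (N *v v) + x $ 3 *s (N *v (N *v v)) = 0"
      by (simp add: vec_eq_iff matrix_vector_mult_def sum_3 h_def u2_def u3_def algebra_simps)
    moreover have "N *v (N *v (N *v v)) = 0" using N_u3 by (simp add: u3_def u2_def)
    ultimately have "x $ 1 = 0" "x $ 2 = 0" "x $ 3 = 0"
      using nilpotent_chain_independent[of N v] v by blast+
    then show "x = 0" by (simp add: vec_eq_iff forall_3)
  qed
  ultimately show ?thesis by blast
qed

section \<open>A criterion for type D\<close>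

lemma type_D_intro:
  assumes "R \<subseteq> X" "S \<subseteq> X" "R \<inter> S = {}"
    and R_stable: "\<And>y x. y \<in> R \<union> S \<Longrightarrow> x \<in> R \<Longrightarrow> op y x \<in> R"
    and S_stable: "\<And>y x. y \<in> R \<union> S \<Longrightarrow> x \<in> S \<Longrightarrow> op y x \<in> S"
    and idem: "\<And>x. x \<in> R \<union> S \<Longrightarrow> op x x = x"
    and "r \<in> R" "s \<in> S" "op r (op s (op r s)) \<noteq> s"
  shows "type_D op X"
proof -
  have orbit: "{op y x | y x. y \<in> R \<union> S \<and> x \<in> T} = T"
    if stable: "\<And>y x. y \<in> R \<union> S \<Longrightarrow> x \<in> T \<Longrightarrow> op y x \<in> T" and "T \<subseteq> R \<union> S" for T
  proof (intro set_eqI iffI)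
    fix z assume "z \<in> {op y x | y x. y \<in> R \<union> S \<and> x \<in> T}"
    then obtain y x where "z = op y x" "y \<in> R \<union> S" "x \<in> T" by blast
    then show "z \<in> T" using stable by simp
  next
    fix x assume "x \<in> T"
    then have "x = op x x" "x \<in> R \<union> S" using idem \<open>T \<subseteq> R \<union> S\<close> by auto
    then show "x \<in> {op y x | y x. y \<in> R \<union> S \<and> x \<in> T}" using \<open>x \<in> T\<close> by blast
  qed
  have "subrack op X (R \<union> S)" "subrack op X R" "subrack op X S"
    unfolding subrack_def using assms(1,2) R_stable S_stable by auto
  moreover have "R \<noteq> {}" "S \<noteq> {}" using \<open>r \<in> R\<close> \<open>s \<in> S\<close> by auto
  moreover have "{op y x | y x. y \<in> R \<union> S \<and> x \<in> R} = R"
    by (rule orbit[OF R_stable]) auto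
  moreover have "{op y x | y x. y \<in> R \<union> S \<and> x \<in> S} = S"
    by (rule orbit[OF S_stable]) auto
  ultimately have "decomposition op X (R \<union> S) R S"
    unfolding decomposition_def using \<open>R \<inter> S = {}\<close> by blast
  then show ?thesis unfolding type_D_def using assms(7-9) by blast
qed

lemma type_D_of_table:
  fixes P :: "'i \<Rightarrow> 'b" and t :: "'i \<Rightarrow> 'i \<Rightarrow> 'i"
  assumes "P ` (I \<union> J) \<subseteq> X" "P ` I \<inter> P ` J = {}"
    and op_table: "\<And>i j. i \<in> I \<union> J \<Longrightarrow> j \<in> I \<union> J \<Longrightarrow> op (P i) (P j) = P (t i j)"
    and I_stable: "\<And>i j. i \<in> I \<union> J \<Longrightarrow> j \<in> I \<Longrightarrow> t i j \<in> I"
    and J_stable: "\<And>i j. i \<in> I \<union> J \<Longrightarrow> j \<in> J \<Longrightarrow> t i j \<in> J"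
    and diagonal: "\<And>i. i \<in> I \<union> J \<Longrightarrow> t i i = i"
    and "r \<in> I" "s \<in> J" "P (t r (t s (t r s))) \<noteq> P s"
  shows "type_D op X"
proof (rule type_D_intro[where R = "P ` I" and S = "P ` J" and r = "P r" and s = "P s"])
  show "P ` I \<subseteq> X" "P ` J \<subseteq> X" "P ` I \<inter> P ` J = {}" using assms(1,2) by auto
  show "op y x \<in> P ` I" if "y \<in> P ` I \<union> P ` J" "x \<in> P ` I" for y x
    using that op_table I_stable by auto
  show "op y x \<in> P ` J" if "y \<in> P ` I \<union> P ` J" "x \<in> P ` J" for y x
    using that op_table J_stable by auto
  show "op x x = x" if "x \<in> P ` I \<union> P ` J" for x
    using that op_table diagonal by auto
  show "P r \<in> P ` I" "P s \<in> P ` J" using assms(7,8) by auto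
  have "t r s \<in> J" "t s (t r s) \<in> J" using assms(7,8) J_stable by auto
  then show "op (P r) (op (P s) (op (P r) (P s))) \<noteq> P s"
    using assms(7-9) op_table by simp
qed


section \<open>The field with four elements and the certificate\<close>

text \<open>A concrete model of GF(4): \<open>Z = 0\<close>, \<open>I = 1\<close>, \<open>W = \<omega>\<close>, \<open>V = \<omega> + 1 = \<omega>\<^sup>2\<close>, where
  \<open>\<omega>\<^sup>2 + \<omega> + 1 = 0\<close>.  Matrices over it are lists of rows, so that identities between
  them can be checked by evaluation.\<close>

datatype f4 = Z | I | W | V

fun f4_add :: "f4 \<Rightarrow> f4 \<Rightarrow> f4" where
  "f4_add Z y = y" | "f4_add x Z = x" | "f4_add I I = Z" | "f4_add I W = V" | "f4_add I V = W"
| "f4_add W I = V" | "f4_add W W = Z" | "f4_add W V = I" | "f4_add V I = W" | "f4_add V W = I"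
| "f4_add V V = Z"

fun f4_mul :: "f4 \<Rightarrow> f4 \<Rightarrow> f4" where
  "f4_mul Z y = Z" | "f4_mul x Z = Z" | "f4_mul I y = y" | "f4_mul x I = x" | "f4_mul W W = V"
| "f4_mul W V = I" | "f4_mul V W = I" | "f4_mul V V = W"

definition f4_mat_mul :: "f4 list list \<Rightarrow> f4 list list \<Rightarrow> f4 list list" where
  "f4_mat_mul A B = map (\<lambda>i. map (\<lambda>j. f4_add (f4_add (f4_mul (A!i!0) (B!0!j))
     (f4_mul (A!i!1) (B!1!j))) (f4_mul (A!i!2) (B!2!j))) [0,1,2]) [0,1,2]"

text \<open>In characteristic 2 the determinant is the sum of the six diagonal products.\<close>

definition f4_det :: "f4 list list \<Rightarrow> f4" where
  "f4_det A = f4_add (f4_add (f4_add (f4_add (f4_add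
      (f4_mul (f4_mul (A!0!0) (A!1!1)) (A!2!2)) (f4_mul (f4_mul (A!0!1) (A!1!2)) (A!2!0)))
      (f4_mul (f4_mul (A!0!2) (A!1!0)) (A!2!1))) (f4_mul (f4_mul (A!0!0) (A!1!2)) (A!2!1)))
      (f4_mul (f4_mul (A!0!1) (A!1!0)) (A!2!2))) (f4_mul (f4_mul (A!0!2) (A!1!1)) (A!2!0))"

definition f4_trace :: "f4 list list \<Rightarrow> f4" where
  "f4_trace A = f4_add (f4_add (A!0!0) (A!1!1)) (A!2!2)"

definition f4_mats_differ :: "f4 list list \<Rightarrow> f4 list list \<Rightarrow> bool" where
  "f4_mats_differ A B = list_ex (\<lambda>a. list_ex (\<lambda>b. A!a!b \<noteq> B!a!b) [0,1,2]) [0,1,2]"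

definition cert_K :: "f4 list list list" where
  "cert_K = [[[I,Z,Z],[I,I,Z],[Z,I,I]],
    [[Z,Z,W],[I,W,V],[V,W,V]],
    [[Z,W,W],[V,V,I],[W,W,W]],
    [[Z,W,V],[V,V,Z],[W,Z,W]],
    [[W,Z,W],[W,W,V],[W,W,I]],
    [[W,W,W],[W,V,I],[W,Z,Z]],
    [[I,I,V],[I,W,V],[Z,I,W]],
    [[V,W,V],[V,V,Z],[V,W,I]],
    [[W,I,V],[W,W,V],[Z,Z,I]],
    [[Z,V,V],[I,I,W],[V,Z,Z]],
    [[Z,Z,V],[W,V,I],[I,V,W]],
    [[Z,I,W],[W,W,Z],[I,I,V]],
    [[I,Z,Z],[I,I,Z],[I,I,I]],
    [[V,Z,V],[V,V,I],[Z,V,I]],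
    [[V,V,V],[V,I,W],[Z,V,V]],
    [[V,V,W],[V,I,W],[V,Z,V]],
    [[W,I,W],[W,W,Z],[Z,Z,I]],
    [[I,V,W],[I,I,W],[I,V,I]]]"

definition cert_G :: "f4 list list list" where
  "cert_G = [[[I,Z,Z],[Z,I,Z],[Z,Z,I]],
    [[Z,Z,I],[W,I,I],[Z,V,V]],
    [[Z,Z,I],[W,I,Z],[W,W,V]],
    [[Z,Z,I],[V,I,W],[W,I,V]],
    [[Z,Z,I],[W,I,I],[Z,V,W]],
    [[Z,Z,I],[W,I,Z],[W,W,W]],
    [[Z,Z,I],[V,I,V],[I,Z,I]],
    [[Z,Z,I],[V,I,W],[W,I,W]],
    [[Z,Z,I],[V,I,V],[I,Z,Z]],
    [[Z,Z,I],[V,I,I],[V,V,V]],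
    [[Z,Z,I],[V,I,Z],[Z,W,W]],
    [[Z,Z,I],[W,I,V],[I,Z,I]],
    [[I,Z,Z],[Z,I,Z],[Z,I,I]],
    [[Z,Z,I],[V,I,Z],[Z,W,V]],
    [[Z,Z,I],[V,I,I],[V,V,W]],
    [[Z,Z,I],[W,I,W],[V,I,W]],
    [[Z,Z,I],[W,I,V],[I,Z,Z]],
    [[Z,Z,I],[W,I,W],[V,I,V]]]"

definition cert_T :: "nat list list" where
  "cert_T = [[0,5,1,6,2,4,7,8,3,10,14,15,12,9,13,16,17,11],
    [7,1,6,5,8,2,3,4,0,9,13,17,15,11,16,14,12,10],
    [6,4,2,8,3,7,5,0,1,14,15,10,11,13,17,12,9,16],
    [2,0,7,3,5,6,8,1,4,12,11,16,13,15,10,9,14,17],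
    [3,6,5,1,4,8,0,2,7,11,16,12,17,10,14,13,15,9],
    [8,7,3,0,1,5,4,6,2,15,10,14,16,17,9,11,13,12],
    [1,8,4,2,7,0,6,3,5,16,12,11,9,14,15,17,10,13],
    [5,2,8,4,0,3,1,7,6,13,17,9,10,16,12,15,11,14],
    [4,3,0,7,6,1,2,5,8,17,9,13,14,12,11,10,16,15],
    [8,1,5,6,7,3,2,0,4,9,17,13,16,10,15,12,14,11],
    [3,4,8,2,6,5,7,1,0,14,10,15,17,16,11,9,12,13],
    [5,0,3,7,2,8,6,4,1,12,16,11,10,17,13,14,9,15],
    [0,2,4,8,5,1,3,6,7,13,9,17,12,14,10,11,15,16],
    [7,8,2,4,1,6,0,5,3,16,11,12,15,13,9,10,17,14],
    [6,3,7,0,4,2,1,8,5,17,13,9,11,15,14,16,10,12],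
    [4,6,1,5,3,0,8,7,2,11,12,16,14,9,17,15,13,10],
    [2,5,6,1,0,7,4,3,8,10,15,14,13,11,12,17,16,9],
    [1,7,0,3,8,4,5,2,6,15,14,10,9,12,16,13,11,17]]"

definition cert_pair_ok :: "nat \<Rightarrow> nat \<Rightarrow> bool" where
  "cert_pair_ok i j \<longleftrightarrow>
     f4_mat_mul (cert_K!i) (cert_K!j) = f4_mat_mul (cert_K!(cert_T!i!j)) (cert_K!i)
   \<and> cert_T!i!j < 18 \<and> (cert_T!i!j < 9 \<longleftrightarrow> j < 9)
   \<and> (i \<noteq> j \<longrightarrow> f4_mats_differ (cert_K!i) (cert_K!j))"

definition cert_elem_ok :: "nat \<Rightarrow> bool" where
  "cert_elem_ok i \<longleftrightarrow> cert_T!i!i = i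
   \<and> f4_mat_mul (cert_G!i) (cert_K!0) = f4_mat_mul (cert_K!i) (cert_G!i)
   \<and> f4_det (cert_G!i) = I \<and> f4_det (cert_K!i) = I \<and> f4_trace (cert_K!i) = I"

lemma cert_pairs_checked: "list_all (\<lambda>i. list_all (cert_pair_ok i) [0..<18]) [0..<18]"
  by code_simp

lemma cert_elems_checked: "list_all cert_elem_ok [0..<18]"
  by code_simp

lemma cert_pair: "i < 18 \<Longrightarrow> j < 18 \<Longrightarrow> cert_pair_ok i j"
  using cert_pairs_checked by (simp add: list_all_iff)

lemma cert_elem: "i < 18 \<Longrightarrow> cert_elem_ok i"
  using cert_elems_checked by (simp add: list_all_iff)

lemma cert_witness: "cert_T!0!(cert_T!9!(cert_T!0!9)) = 11"
  by code_simp

lemma cert_K0: "cert_K!0 = [[I,Z,Z],[I,I,Z],[Z,I,I]]"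
  by (simp add: cert_K_def)


section \<open>Transporting the certificate into the field\<close>

definition f4_emb :: "'a::field \<Rightarrow> f4 \<Rightarrow> 'a" where
  "f4_emb w x = (case x of Z \<Rightarrow> 0 | I \<Rightarrow> 1 | W \<Rightarrow> w | V \<Rightarrow> w + 1)"

definition idx3 :: "3 \<Rightarrow> nat" where
  "idx3 i = (if i = 1 then 0 else if i = 2 then 1 else 2)"

lemma idx3_simps: "idx3 1 = 0" "idx3 2 = 1" "idx3 3 = 2"
  by (simp_all add: idx3_def)

definition f4_mat :: "'a::field \<Rightarrow> f4 list list \<Rightarrow> 'a^3^3" where
  "f4_mat w L = (\<chi> i j. f4_emb w (L ! idx3 i ! idx3 j))"

context
  fixes w :: "'a::field"
  assumes char2: "1 + 1 = (0::'a)" and omega: "w * w + w + 1 = 0"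
begin

lemma add_self_char2: "y + y = (0::'a)"
  by (metis char2 distrib_right mult_1 mult_zero_left)

lemma uminus_char2: "- y = (y::'a)"
  using add_self_char2 add.inverse_unique by blast

lemma minus_char2: "(a::'a) - b = a + b"
  by (simp only: diff_conv_add_uminus uminus_char2)

lemma omega_facts:
  shows "w * w = w + 1" "w * (w + 1) = 1" "(w + 1) * w = 1" "(w + 1) * (w + 1) = w"
    and "w \<noteq> 0" "w \<noteq> 1" "w + 1 \<noteq> 0" "w + 1 \<noteq> 1" "w \<noteq> w + 1" "w + 1 \<noteq> w"
proof -
  have "w * w = - (w + 1)" using omega by (simp only: eq_neg_iff_add_eq_0 add.assoc)
  then show ww: "w * w = w + 1" by (simp only: uminus_char2)
  have two: "(2::'a) = 0" using char2 by simp
  have cancel: "w + (w + y) = y" for y using add_self_char2 by (simp add: add.assoc[symmetric])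
  show "w * (w + 1) = 1" by (simp add: distrib_left ww add.assoc cancel two)
  show "(w + 1) * w = 1" by (simp add: distrib_right ww add.assoc cancel two)
  show "(w + 1) * (w + 1) = w"
    by (simp add: distrib_right distrib_left ww add.assoc cancel char2 two)
  show "w \<noteq> 0" using omega by auto
  show "w \<noteq> 1" using omega char2 by auto
  show "w + 1 \<noteq> 0" using \<open>w \<noteq> 1\<close> uminus_char2 by (metis add.commute add_left_cancel add_self_char2)
  show "w + 1 \<noteq> 1" using \<open>w \<noteq> 0\<close> by simp
  show "w \<noteq> w + 1" "w + 1 \<noteq> w" by simp_all
qed

lemma f4_emb_add: "f4_emb w (f4_add x y) = f4_emb w x + f4_emb w y"
  using char2 omega by (cases x; cases y; simp add: f4_emb_def; algebra)

lemma f4_emb_mul: "f4_emb w (f4_mul x y) = f4_emb w x * f4_emb w y"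
  using omega_facts by (cases x; cases y; simp add: f4_emb_def)

lemma f4_emb_inj: "f4_emb w x = f4_emb w y \<Longrightarrow> x = y"
  using omega_facts by (cases x; cases y; auto simp: f4_emb_def dest: sym)

lemma f4_mat_mult: "f4_mat w (f4_mat_mul A B) = f4_mat w A ** f4_mat w B"
  by (simp add: vec_eq_iff forall_3 f4_mat_def f4_mat_mul_def matrix_matrix_mult_def sum_3
      idx3_simps f4_emb_add f4_emb_mul)

lemma det_f4_mat: "det (f4_mat w A) = f4_emb w (f4_det A)"
  by (simp add: det_3 f4_mat_def idx3_simps f4_det_def f4_emb_add f4_emb_mul minus_char2)

lemma trace_f4_mat: "f4_mat w A $ 1 $ 1 + f4_mat w A $ 2 $ 2 + f4_mat w A $ 3 $ 3 = f4_emb w (f4_trace A)"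
  by (simp add: f4_mat_def idx3_simps f4_trace_def f4_emb_add)

lemma f4_mat_neq:
  assumes "f4_mats_differ A B"
  shows "f4_mat w A \<noteq> f4_mat w B"
proof
  assume eq: "f4_mat w A = f4_mat w B"
  obtain a b where ab: "a \<in> {0, 1, 2}" "b \<in> {0, 1, 2}" "A!a!b \<noteq> B!a!b"
    using assms unfolding f4_mats_differ_def list_ex_iff by auto
  obtain i j :: 3 where "idx3 i = a" "idx3 j = b"
    using ab(1,2) idx3_simps by (metis empty_iff insert_iff)
  then have "f4_emb w (A!a!b) = f4_emb w (B!a!b)"
    using arg_cong[OF eq, of "\<lambda>M. M $ i $ j"] by (simp add: f4_mat_def)
  then show False using f4_emb_inj ab(3) by blast
qed

lemma f4_mat_cert_K0: "f4_mat w (cert_K!0) = J3"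
  by (simp add: cert_K0 vec_eq_iff forall_3 f4_mat_def idx3_simps J3_def f4_emb_def)

end

definition cert_cls :: "'a::field \<Rightarrow> 'a^3^3 \<Rightarrow> nat \<Rightarrow> ('a^3^3) set" where
  "cert_cls w h i = pcls (mconj h (f4_mat w (cert_K!i)))"

context
  fixes w :: "'a::field" and h :: "'a^3^3"
  assumes char2: "1 + 1 = (0::'a)" and omega: "w * w + w + 1 = 0" and h_inv: "invertible h"
begin

lemma cert_cls_conj:
  assumes "i < 18" "j < 18"
  shows "pconj (cert_cls w h i) (cert_cls w h j) = cert_cls w h (cert_T!i!j)"
proof -
  let ?M = "\<lambda>k. mconj h (f4_mat w (cert_K!k))"
  have "det (?M i) = 1"
    using cert_elem[OF assms(1)]
    by (simp add: cert_elem_ok_def det_mconj[OF h_inv] det_f4_mat[OF char2 omega] f4_emb_def)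
  then have "invertible (?M i)" by (simp add: invertible_det_nz)
  moreover have "?M i ** ?M j = ?M (cert_T!i!j) ** ?M i"
    using cert_pair[OF assms] unfolding cert_pair_ok_def
    by (simp add: mconj_mult[OF h_inv] f4_mat_mult[OF char2 omega, symmetric])
  ultimately show ?thesis unfolding cert_cls_def by (rule pconj_of_commutation)
qed

text \<open>Distinct indices give distinct classes: a cube-root multiple relating two trace-1
  matrices must be 1, and the certificate matrices are pairwise distinct.\<close>

lemma cert_cls_distinct:
  assumes "i < 18" "j < 18" "i \<noteq> j"
  shows "cert_cls w h i \<noteq> cert_cls w h j"
proof
  let ?E = "\<lambda>k. f4_mat w (cert_K!k)"
  assume "cert_cls w h i = cert_cls w h j"
  then obtain c where "mconj h (?E j) = smul c (mconj h (?E i))"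
    unfolding cert_cls_def using pcls_eq_imp_smul by blast
  then have Ej: "?E j = smul c (?E i)"
    by (simp add: mconj_smul[OF h_inv, symmetric] mconj_inj[OF h_inv])
  have trace_one: "?E k $ 1 $ 1 + ?E k $ 2 $ 2 + ?E k $ 3 $ 3 = 1" if "k < 18" for k
    using cert_elem[OF that] by (simp add: cert_elem_ok_def trace_f4_mat[OF char2 omega] f4_emb_def)
  have "c * (?E i $ 1 $ 1 + ?E i $ 2 $ 2 + ?E i $ 3 $ 3) = 1"
    using trace_one[OF assms(2)] unfolding Ej smul_entry by (simp add: distrib_left)
  then have "c = 1" using trace_one[OF assms(1)] by simp
  then have "?E j = ?E i" using Ej by (simp add: smul_one)
  moreover have "f4_mats_differ (cert_K!i) (cert_K!j)"
    using cert_pair[OF assms(1,2)] assms(3) by (simp add: cert_pair_ok_def)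
  ultimately show False using f4_mat_neq[OF char2 omega] by metis
qed

text \<open>If \<open>A = h J3 h\<^sup>-\<^sup>1\<close>, every certificate class is conjugate to \<open>[A]\<close> via \<open>[h G\<^sub>i h\<^sup>-\<^sup>1]\<close>.\<close>

lemma cert_cls_in_conj_class:
  assumes "A ** h = h ** J3" "i < 18"
  shows "cert_cls w h i \<in> psl3_conj_class (pcls A)"
proof -
  let ?G = "mconj h (f4_mat w (cert_G!i))"
  have "A = mconj h J3"
  proof -
    have "A = A ** (h ** matrix_inv h)" by (simp add: matrix_inv_mult[OF h_inv])
    then show ?thesis by (simp add: matrix_mul_assoc assms(1) mconj_def)
  qed
  then have A_eq: "A = mconj h (f4_mat w (cert_K!0))" by (simp add: f4_mat_cert_K0[OF char2 omega])
  have "det ?G = 1"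
    using cert_elem[OF assms(2)]
    by (simp add: cert_elem_ok_def det_mconj[OF h_inv] det_f4_mat[OF char2 omega] f4_emb_def)
  moreover have "?G ** A = mconj h (f4_mat w (cert_K!i)) ** ?G"
    using cert_elem[OF assms(2)] unfolding A_eq cert_elem_ok_def
    by (simp add: mconj_mult[OF h_inv] f4_mat_mult[OF char2 omega, symmetric])
  ultimately show ?thesis unfolding cert_cls_def by (rule mem_psl3_conj_class)
qed

end

theorem mainTheorem15:
  fixes m :: nat and A :: "('a::{field,finite})^3^3"
  assumes "m \<ge> 1"
    and "CARD('a) = 2 ^ (2 * m)"
    and "regular_unipotent3 A"
  shows "type_D pconj (psl3_conj_class (pcls A))"
proof -
  have char2: "(1::'a) + 1 = 0" using card_four_power_facts(1)[OF assms(1,2)] .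
  obtain w :: 'a where omega: "w * w + w + 1 = 0" using card_four_power_facts(2)[OF assms(1,2)] ..
  obtain h where h: "invertible h" "A ** h = h ** J3"
    using assms(3) regular_unipotent_conj_J3 unfolding regular_unipotent3_def by blast
  let ?P = "cert_cls w h" and ?I = "{..<9::nat}" and ?J = "{9..<18::nat}"
  show ?thesis
  proof (rule type_D_of_table[where P = ?P and t = "\<lambda>i j. cert_T!i!j" and I = ?I and J = ?J
        and r = 0 and s = 9])
    show "?P ` (?I \<union> ?J) \<subseteq> psl3_conj_class (pcls A)"
      using cert_cls_in_conj_class[OF char2 omega h] by auto
    show "?P ` ?I \<inter> ?P ` ?J = {}"
      using cert_cls_distinct[OF char2 omega h(1)] by fastforce
    show "pconj (?P i) (?P j) = ?P (cert_T!i!j)" if "i \<in> ?I \<union> ?J" "j \<in> ?I \<union> ?J" for i j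
      using that cert_cls_conj[OF char2 omega h(1)] by auto
    show "cert_T!i!j \<in> ?I" if "i \<in> ?I \<union> ?J" "j \<in> ?I" for i j
      using that cert_pair[of i j] by (auto simp: cert_pair_ok_def)
    show "cert_T!i!j \<in> ?J" if "i \<in> ?I \<union> ?J" "j \<in> ?J" for i j
      using that cert_pair[of i j] by (auto simp: cert_pair_ok_def)
    show "cert_T!i!i = i" if "i \<in> ?I \<union> ?J" for i
      using that cert_elem[of i] by (auto simp: cert_elem_ok_def)
    show "?P (cert_T!0!(cert_T!9!(cert_T!0!9))) \<noteq> ?P 9"
      using cert_witness cert_cls_distinct[OF char2 omega h(1), of 11 9] by simp
  qed auto
qed

end
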